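(* Let $n,m,k$ be integers with $1\le k<m/2$. If $n$ and $m$ are sufficiently large, then $R_0(h_{k,n,m})=\Omega(nm)$.
   Context: Let $n,m$ be positive integers, $1\le k<m$ an integer, $M=[n]\times[m]$ (a grid of cells with $n$ rows and $m$ columns), $\tilde M=M\cup\{\bot\}$ (pointers to cells, $\bot$ the null pointer). Let $T$ be the following fixed binary tree with $m$ leaves and $m-1$ internal nodes: if $m=2^r$, $T$ is the complete binary tree with $2^r$ leaves; if $2^r<m<2^{r+1}$, take the complete binary tree with $2^r$ leaves and add a pair of children to each of its $m-2^r$ leftmost leaves. Outgoing arcs are labeled 'left'/'right', leaves labeled $1,\dots,m$ from left to right, and $T(j)$ is the sequence of labels on the root-to-leaf-$j$ path. The alphabet is $\Sigma=\{0,1\}\times\tilde M\times\tilde M\times\tilde M$ with components $\mathrm{val},\mathrm{lpoint},\mathrm{rpoint},\mathrm{ipoint}$. The function $h_{k,n,m}\colon\Sigma^M\to\{0,1\}$ has $h_{k,n,m}(x)=1$ iff: (1) there are exactly $k$ columns $b_1,\dots,b_k$ with $\mathrm{val}(x_{i,b_s})=1$ for all $i\in[n]$, $s\in[k]$ (marked columns); (2) each marked column $b_s$ contains a unique cell $a_s$ with $x_{a_s}\ne(1,\bot,\bot,\bot)$ (special elements); (3) $\mathrm{ipoint}(x_{a_s})=a_{s+1}$ for $s\in[k-1]$, $\mathrm{ipoint}(x_{a_k})=a_1$, and $\mathrm{lpoint}(x_{a_s})=\mathrm{lpoint}(x_{a_t})$, $\mathrm{rpoint}(x_{a_s})=\mathrm{rpoint}(x_{a_t})$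 for all $s,t\in[k]$; (4) for each non-marked column $j$, the path starting at a special element and following $\mathrm{lpoint},\mathrm{rpoint}$ as specified by $T(j)$ exists (no $\bot$ on it) and ends at a cell $\ell_j$ in column $j$ with $\mathrm{val}(x_{\ell_j})=0$. A query returns the symbol $x_c\in\Sigma$ of one cell. $R_0(f)$ is the minimum, over randomized decision trees always outputting $f(x)$, of the worst-case expected number of queries. *)

theory Defs
  imports "HOL-Probability.Probability"
begin

text \<open>A cell is (row, column); the grid M is [n] x [m]. A pointer is a cell option
  (None = the null pointer). A symbol is (val, lpoint, rpoint, ipoint), with val
  True meaning 1 and False meaning 0.\<close>

type_synonym cell = "nat \<times> nat"
type_synonym sym = "bool \<times> cell option \<times> cell option \<times> cell option"

definition grid :: "nat \<Rightarrow> nat \<Rightarrow> cell set" where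
  "grid n m = {1..n} \<times> {1..m}"

definition val :: "sym \<Rightarrow> bool" where "val s = fst s"
definition lpoint :: "sym \<Rightarrow> cell option" where "lpoint s = fst (snd s)"
definition rpoint :: "sym \<Rightarrow> cell option" where "rpoint s = fst (snd (snd s))"
definition ipoint :: "sym \<Rightarrow> cell option" where "ipoint s = snd (snd (snd s))"

definition ptrs :: "nat \<Rightarrow> nat \<Rightarrow> cell option set" where
  "ptrs n m = {None} \<union> Some ` grid n m"

definition Sigma_alph :: "nat \<Rightarrow> nat \<Rightarrow> sym set" where
  "Sigma_alph n m = UNIV \<times> ptrs n m \<times> ptrs n m \<times> ptrs n m"

text \<open>Inputs x in Sigma^M, represented as total functions on cells that are
  constant (a dummy value) outside the grid.\<close>
definition inputs :: "nat \<Rightarrow> nat \<Rightarrow> (cell \<Rightarrow> sym) set" where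
  "inputs n m = {x. (\<forall>c\<in>grid n m. x c \<in> Sigma_alph n m) \<and>
                    (\<forall>c. c \<notin> grid n m \<longrightarrow> x c = (False, None, None, None))}"

fun tlog :: "nat \<Rightarrow> nat" where
  "tlog m = (if m < 2 then 0 else Suc (tlog (m div 2)))"

text \<open>bits l v: the l-bit binary representation of v, most significant bit first
  (False = 'left', True = 'right').\<close>
fun bits :: "nat \<Rightarrow> nat \<Rightarrow> bool list" where
  "bits 0 v = []"
| "bits (Suc l) v = bits l (v div 2) @ [odd v]"

text \<open>T(j): labels on the root-to-leaf-j path (leaves numbered 1..m left to right).
  With r = floor(log2 m) and e = m - 2^r, the e leftmost leaves of the complete tree
  of depth r get two children, so the first 2e leaves are at depth r+1 and the
  remaining ones at depth r.\<close>
definition Tpath :: "nat \<Rightarrow> nat \<Rightarrow> bool list" where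
  "Tpath m j = (let r = tlog m; e = m - 2 ^ r in
                if j \<le> 2 * e then bits (Suc r) (j - 1) else bits r (j - 1 - e))"

fun follow :: "(cell \<Rightarrow> sym) \<Rightarrow> cell \<Rightarrow> bool list \<Rightarrow> cell option" where
  "follow x c [] = Some c"
| "follow x c (b # bs) =
     (case (if b then rpoint (x c) else lpoint (x c)) of
        None \<Rightarrow> None
      | Some c' \<Rightarrow> follow x c' bs)"

definition blank :: sym where "blank = (True, None, None, None)"

definition marked_cols :: "nat \<Rightarrow> nat \<Rightarrow> (cell \<Rightarrow> sym) \<Rightarrow> nat set" where
  "marked_cols n m x = {j\<in>{1..m}. \<forall>i\<in>{1..n}. val (x (i, j))}"

definition h :: "nat \<Rightarrow> nat \<Rightarrow> nat \<Rightarrow> (cell \<Rightarrow> sym) \<Rightarrow> bool" where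
  "h k n m x = (let B = marked_cols n m x in
     card B = k \<and>
     (\<exists>b a :: nat \<Rightarrow> nat.
        bij_betw b {1..k} B \<and>
        (\<forall>s\<in>{1..k}. a s \<in> {1..n} \<and> x (a s, b s) \<noteq> blank \<and>
                     (\<forall>i\<in>{1..n}. i \<noteq> a s \<longrightarrow> x (i, b s) = blank)) \<and>
        (\<forall>s\<in>{1..k}. s < k \<longrightarrow> ipoint (x (a s, b s)) = Some (a (Suc s), b (Suc s))) \<and>
        ipoint (x (a k, b k)) = Some (a 1, b 1) \<and>
        (\<forall>s\<in>{1..k}. \<forall>t\<in>{1..k}.
            lpoint (x (a s, b s)) = lpoint (x (a t, b t)) \<and>
            rpoint (x (a s, b s)) = rpoint (x (a t, b t))) \<and>
        (\<forall>j\<in>{1..m} - B. \<exists>l. follow x (a 1, b 1) (Tpath m j) = Some l \<and>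
                              snd l = j \<and> \<not> val (x l))))"

datatype dtree = Leaf bool | Query cell "sym \<Rightarrow> dtree"

primrec eval :: "dtree \<Rightarrow> (cell \<Rightarrow> sym) \<Rightarrow> bool" where
  "eval (Leaf b) x = b"
| "eval (Query c f) x = eval (f (x c)) x"

primrec cost :: "dtree \<Rightarrow> (cell \<Rightarrow> sym) \<Rightarrow> nat" where
  "cost (Leaf b) x = 0"
| "cost (Query c f) x = Suc (cost (f (x c)) x)"

definition R0 :: "(cell \<Rightarrow> sym) set \<Rightarrow> ((cell \<Rightarrow> sym) \<Rightarrow> bool) \<Rightarrow> ennreal" where
  "R0 D f = (INF \<mu> \<in> {\<mu> :: dtree pmf. \<forall>T\<in>set_pmf \<mu>. \<forall>x\<in>D. eval T x = f x}.
               SUP x\<in>D. \<integral>\<^sup>+ T. ennreal (real (cost T x)) \<partial>(measure_pmf \<mu>))"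

end

theory Submission
  imports Defs
begin

text \<open>By the averaging (easy) direction of Yao's principle it suffices to bound the average cost of
  a correct deterministic tree on the hard inputs, in which column \<open>j\<close> is blank except for a
  single \<open>0\<close> in row \<open>\<sigma> j\<close>; on these \<open>h\<close> is \<open>0\<close>.
  If a correct tree spends fewer than \<open>nm/8\<close> queries on such an input, it has seen all but
  fewer than \<open>k\<close> of the zero cells: otherwise \<open>k\<close> unseen zero cells can be turned into the
  special elements of a \<open>1\<close>-input whose pointer tree lives in unqueried cells, and the tree
  cannot tell the two inputs apart. But a \<open>0\<close> hidden uniformly in a column of \<open>n\<close> cells is
  only found with about \<open>n/2\<close> queries per success, so on average the tree makes \<open>\<Omega>(nm)\<close>
  queries.\<close>

primrec queries :: "dtree \<Rightarrow> (cell \<Rightarrow> sym) \<Rightarrow> cell set" where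
  "queries (Leaf v) x = {}"
| "queries (Query c f) x = insert c (queries (f (x c)) x)"

lemma eval_cong_queries: "(\<And>c. c \<in> queries T x \<Longrightarrow> y c = x c) \<Longrightarrow> eval T y = eval T x"
  by (induction T) auto

lemma finite_queries [simp]: "finite (queries T x)"
  by (induction T) auto

lemma card_queries_le_cost: "card (queries T x) \<le> cost T x"
  by (induction T) (auto simp: card_insert_if intro: le_SucI)

lemma sum_card_queries_columns_le_cost:
  "(\<Sum>j\<in>J. card (queries T x \<inter> (I \<times> {j}))) \<le> cost T x" if "finite J"
proof -
  have "(\<Sum>j\<in>J. card (queries T x \<inter> (I \<times> {j}))) = card (\<Union>j\<in>J. queries T x \<inter> (I \<times> {j}))"
    using that by (intro card_UN_disjoint[symmetric]) auto
  also have "\<dots> \<le> card (queries T x)"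
    by (intro card_mono) auto
  finally show ?thesis
    using card_queries_le_cost le_trans by blast
qed

definition needles_found :: "dtree \<Rightarrow> (cell \<Rightarrow> sym) \<Rightarrow> (cell \<Rightarrow> sym) \<Rightarrow> cell set \<Rightarrow> cell set" where
  "needles_found T x v P = {p\<in>P. p \<in> queries T (x(p := v p))}"

definition needle_probes :: "dtree \<Rightarrow> (cell \<Rightarrow> sym) \<Rightarrow> (cell \<Rightarrow> sym) \<Rightarrow> cell set \<Rightarrow> nat" where
  "needle_probes T x v P = (\<Sum>p\<in>P. card (queries T (x(p := v p)) \<inter> P))"

lemma needle_search_Query_not_mem:
  assumes "c \<notin> P"
  shows "needles_found (Query c f) x v P = needles_found (f (x c)) x v P"
    and "needle_probes (Query c f) x v P = needle_probes (f (x c)) x v P"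
proof -
  have step: "queries (Query c f) (x(p := v p)) \<inter> P = queries (f (x c)) (x(p := v p)) \<inter> P"
    if "p \<in> P" for p
    using that assms by auto
  then show "needles_found (Query c f) x v P = needles_found (f (x c)) x v P"
    by (auto simp: needles_found_def)
  show "needle_probes (Query c f) x v P = needle_probes (f (x c)) x v P"
    unfolding needle_probes_def by (rule sum.cong) (simp_all only: step)
qed

lemma needle_search_Query_mem:
  assumes "c \<in> P" "finite P"
  shows "needles_found (Query c f) x v P = insert c (needles_found (f (x c)) x v (P - {c}))"
    and "needle_probes (Query c f) x v P
         = card (queries (Query c f) (x(c := v c)) \<inter> P) + card (P - {c})
           + needle_probes (f (x c)) x v (P - {c})"
proof -
  have step: "queries (Query c f) (x(p := v p)) \<inter> P = insert c (queries (f (x c)) (x(p := v p)) \<inter> (P - {c}))"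
    if "p \<in> P - {c}" for p
    using that assms(1) by auto
  then show "needles_found (Query c f) x v P = insert c (needles_found (f (x c)) x v (P - {c}))"
    using assms(1) by (auto simp: needles_found_def)
  have "(\<Sum>p\<in>P - {c}. card (queries (Query c f) (x(p := v p)) \<inter> P))
      = (\<Sum>p\<in>P - {c}. Suc (card (queries (f (x c)) (x(p := v p)) \<inter> (P - {c}))))"
  proof (rule sum.cong)
    show "card (queries (Query c f) (x(p := v p)) \<inter> P) = Suc (card (queries (f (x c)) (x(p := v p)) \<inter> (P - {c})))"
      if "p \<in> P - {c}" for p
      unfolding step[OF that] using assms(2) by simp
  qed simp
  then show "needle_probes (Query c f) x v P
      = card (queries (Query c f) (x(c := v c)) \<inter> P) + card (P - {c}) + needle_probes (f (x c)) x v (P - {c})"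
    using assms by (simp add: needle_probes_def sum.remove sum_Suc)
qed

text \<open>On the inputs \<open>x(p := v p)\<close> the tree runs as on \<open>x\<close> until it queries \<open>p\<close>.
  Hence if it finds \<open>\<ell>\<close> of the needles \<open>p \<in> P\<close>, the \<open>i\<close>-th one found costs at least \<open>i\<close>
  queries inside \<open>P\<close>, and the total is at least \<open>1 + \<dots> + \<ell>\<close>.\<close>
lemma needle_search_queries:
  "finite P \<Longrightarrow> card (needles_found T x v P) * (card (needles_found T x v P) + 1) \<le> 2 * needle_probes T x v P"
proof (induction T arbitrary: P)
  case (Leaf v)
  then show ?case
    by (simp add: needles_found_def)
next
  case (Query c f)
  show ?case
  proof (cases "c \<in> P")
    case False
    then show ?thesis
      using Query by (simp add: needle_search_Query_not_mem)
  next
    case True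
    let ?r = "card (needles_found (f (x c)) x v (P - {c}))"
    have "?r * (?r + 1) \<le> 2 * needle_probes (f (x c)) x v (P - {c})"
      using Query by simp
    moreover have "?r \<le> card (P - {c})"
      using Query.prems by (intro card_mono) (auto simp: needles_found_def)
    moreover have "1 \<le> card (queries (Query c f) (x(c := v c)) \<inter> P)"
      using True Query.prems by (auto simp: Suc_le_eq card_gt_0_iff)
    moreover have "card (insert c (needles_found (f (x c)) x v (P - {c}))) = Suc ?r"
      using Query.prems by (simp add: needles_found_def)
    ultimately show ?thesis
      using True Query.prems by (simp add: needle_search_Query_mem algebra_simps)
  qed
qed

declare tlog.simps [simp del]

lemma length_bits [simp]: "length (bits l v) = l"
  by (induction l arbitrary: v) auto

lemma bits_inj: "v < 2 ^ l \<Longrightarrow> w < 2 ^ l \<Longrightarrow> bits l v = bits l w \<Longrightarrow> v = w"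
proof (induction l arbitrary: v w)
  case (Suc l)
  then have "v div 2 = w div 2" and "odd v = odd w"
    by auto
  then show ?case
    by (metis dvd_mult_div_cancel odd_two_times_div_two_succ)
qed simp

lemma tlog_bounds: "1 \<le> m \<Longrightarrow> 2 ^ tlog m \<le> m \<and> m < 2 ^ Suc (tlog m)"
proof (induction m rule: tlog.induct)
  case (1 m)
  show ?case
  proof (cases "m < 2")
    case True
    then show ?thesis
      using "1.prems" by (simp add: tlog.simps)
  next
    case False
    then have "2 ^ tlog (m div 2) \<le> m div 2 \<and> m div 2 < 2 ^ Suc (tlog (m div 2))"
      using "1.IH" by simp
    then show ?thesis
      using False by (auto simp: tlog.simps[of m])
  qed
qed

lemma length_Tpath:
  assumes "2 \<le> m"
  shows "1 \<le> length (Tpath m j) \<and> length (Tpath m j) \<le> Suc (tlog m)"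
proof -
  have "1 \<le> tlog m"
    using assms by (simp add: tlog.simps)
  then show ?thesis
    by (simp add: Tpath_def Let_def)
qed

lemma Tpath_inj:
  assumes "2 \<le> m" "j \<in> {1..m}" "j' \<in> {1..m}" "Tpath m j = Tpath m j'"
  shows "j = j'"
proof -
  define r where "r = tlog m"
  define e where "e = m - 2 ^ r"
  have m: "2 ^ r \<le> m" "m < 2 ^ Suc r"
    using tlog_bounds[of m] assms(1) by (auto simp: r_def)
  have T: "Tpath m i = (if i \<le> 2 * e then bits (Suc r) (i - 1) else bits r (i - 1 - e))" for i
    by (simp add: Tpath_def r_def e_def Let_def)
  have "length (Tpath m j) = length (Tpath m j')"
    using assms(4) by simp
  then have "j \<le> 2 * e \<longleftrightarrow> j' \<le> 2 * e"
    by (auto simp: T split: if_splits)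
  then consider "j \<le> 2 * e" "j' \<le> 2 * e" | "\<not> j \<le> 2 * e" "\<not> j' \<le> 2 * e"
    by blast
  then show ?thesis
  proof cases
    case 1
    have "j - 1 < 2 ^ Suc r" "j' - 1 < 2 ^ Suc r"
      using assms(2,3) m by auto
    moreover have "bits (Suc r) (j - 1) = bits (Suc r) (j' - 1)"
      using 1 assms(4) T[of j] T[of j'] by metis
    ultimately have "j - 1 = j' - 1"
      by (rule bits_inj)
    then show ?thesis
      using assms(2,3) by auto
  next
    case 2
    have "j - 1 - e < 2 ^ r" "j' - 1 - e < 2 ^ r"
      using assms(2,3) m by (auto simp: e_def)
    moreover have "bits r (j - 1 - e) = bits r (j' - 1 - e)"
      using 2 assms(4) T[of j] T[of j'] by metis
    ultimately have "j - 1 - e = j' - 1 - e"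
      by (rule bits_inj)
    then show ?thesis
      using 2 by simp
  qed
qed

lemma Tpath_not_proper_prefix:
  assumes "2 \<le> m" "j \<in> {1..m}" "j' \<in> {1..m}" "i < length (Tpath m j)"
  shows "take i (Tpath m j) \<noteq> Tpath m j'"
proof
  assume eq: "take i (Tpath m j) = Tpath m j'"
  define r where "r = tlog m"
  define e where "e = m - 2 ^ r"
  have m: "2 ^ r \<le> m" "m < 2 ^ Suc r"
    using tlog_bounds[of m] assms(1) by (auto simp: r_def)
  have T: "Tpath m i = (if i \<le> 2 * e then bits (Suc r) (i - 1) else bits r (i - 1 - e))" for i
    by (simp add: Tpath_def r_def e_def Let_def)
  have "length (Tpath m j') = i"
    using arg_cong[OF eq, of length] assms(4) by simp
  then have j: "j \<le> 2 * e" and j': "\<not> j' \<le> 2 * e" and i: "i = r"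
    using assms(4) by (auto simp: T split: if_splits)
  \<comment> \<open>the depth-\<open>r\<close> ancestor of a deep leaf \<open>j\<close> is the extended leaf \<open>(j - 1) div 2 < e\<close>\<close>
  have "bits r ((j - 1) div 2) = bits r (j' - 1 - e)"
    using eq j j' i by (simp add: T)
  moreover have "(j - 1) div 2 < e" "e < 2 ^ r" "j' - 1 - e < 2 ^ r"
    using j assms(2,3) m by (auto simp: e_def)
  ultimately have "(j - 1) div 2 = j' - 1 - e"
    using bits_inj by (metis order.strict_trans)
  with \<open>(j - 1) div 2 < e\<close> j' show False
    by simp
qed

text \<open>Every nonempty proper prefix of a path \<open>Tpath m j\<close> lies in \<open>inner_paths m\<close>; the set may also
  contain leaves of depth \<open>tlog m\<close>, which never serve as inner nodes.\<close>
definition inner_paths :: "nat \<Rightarrow> bool list set" where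
  "inner_paths m = {u. 1 \<le> length u \<and> length u \<le> tlog m}"

lemma finite_inner_paths: "finite (inner_paths m)"
proof -
  have "inner_paths m \<subseteq> {u. set u \<subseteq> UNIV \<and> length u \<le> tlog m}"
    by (auto simp: inner_paths_def)
  then show ?thesis
    using finite_lists_length_le[of "UNIV :: bool set"] finite_subset by auto
qed

lemma card_inner_paths: "1 \<le> m \<Longrightarrow> card (inner_paths m) \<le> 2 * m"
proof -
  assume "1 \<le> m"
  have "card (inner_paths m) \<le> card {u. set u \<subseteq> (UNIV :: bool set) \<and> length u \<le> tlog m}"
    using finite_lists_length_le[of "UNIV :: bool set"] by (intro card_mono) (auto simp: inner_paths_def)
  also have "\<dots> = (\<Sum>i\<le>tlog m. 2 ^ i)"
    using card_lists_length_le[of "UNIV :: bool set" "tlog m"] by simp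
  also have "\<dots> = 2 ^ Suc (tlog m) - 1"
    using sum_power2[of "Suc (tlog m)"] by (simp add: atLeast0LessThan lessThan_Suc_atMost)
  also have "\<dots> \<le> 2 * m"
    using tlog_bounds[OF \<open>1 \<le> m\<close>] by auto
  finally show ?thesis .
qed

lemma take_Tpath_in_inner_paths:
  "2 \<le> m \<Longrightarrow> 0 < i \<Longrightarrow> i < length (Tpath m j) \<Longrightarrow> take i (Tpath m j) \<in> inner_paths m"
  using length_Tpath[of m j] by (auto simp: inner_paths_def)

lemma follow_labelled_path:
  assumes "\<And>u b w. p = u @ b # w \<Longrightarrow>
             (if b then rpoint (x (g u)) else lpoint (x (g u))) = Some (g (u @ [b]))"
  shows "follow x (g []) p = Some (g p)"
  using assms
proof (induction p arbitrary: g)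
  case (Cons b p)
  have "follow x (g [b]) p = Some (g (b # p))"
    using Cons.IH[of "\<lambda>u. g (b # u)"] Cons.prems[of "b # _"] by auto
  moreover have "(if b then rpoint (x (g [])) else lpoint (x (g []))) = Some (g [b])"
    using Cons.prems[of "[]" b p] by simp
  ultimately show ?case
    by simp
qed simp

definition zero_sym :: sym where
  "zero_sym = (False, None, None, None)"

definition hard_input :: "nat \<Rightarrow> nat \<Rightarrow> (nat \<Rightarrow> nat) \<Rightarrow> cell \<Rightarrow> sym" where
  "hard_input n m \<sigma> c = (if c \<in> grid n m \<and> fst c \<noteq> \<sigma> (snd c) then blank else zero_sym)"

lemma hard_input_in_inputs: "hard_input n m \<sigma> \<in> inputs n m"
  by (auto simp: inputs_def hard_input_def Sigma_alph_def ptrs_def zero_sym_def blank_def)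

lemma not_h_hard_input:
  assumes "\<And>j. j \<in> {1..m} \<Longrightarrow> \<sigma> j \<in> {1..n}" and "1 \<le> k"
  shows "\<not> h k n m (hard_input n m \<sigma>)"
proof -
  have "\<not> val (hard_input n m \<sigma> (\<sigma> j, j))" for j
    by (simp add: hard_input_def zero_sym_def val_def)
  then have "marked_cols n m (hard_input n m \<sigma>) = {}"
    using assms(1) by (fastforce simp: marked_cols_def)
  then show ?thesis
    using assms(2) by (simp add: h_def)
qed

definition free_cells :: "nat \<Rightarrow> nat \<Rightarrow> (nat \<Rightarrow> nat) \<Rightarrow> nat set \<Rightarrow> cell set" where
  "free_cells n m \<sigma> B = {c \<in> grid n m. snd c \<notin> B \<and> fst c \<noteq> \<sigma> (snd c)}"

lemma card_free_cells:
  assumes "\<And>j. j \<in> {1..m} \<Longrightarrow> \<sigma> j \<in> {1..n}" and "B \<subseteq> {1..m}"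
  shows "card (free_cells n m \<sigma> B) = (m - card B) * (n - 1)"
proof -
  have "free_cells n m \<sigma> B = prod.swap ` Sigma ({1..m} - B) (\<lambda>j. {1..n} - {\<sigma> j})"
    by (force simp: free_cells_def grid_def)
  then have "card (free_cells n m \<sigma> B) = (\<Sum>j\<in>{1..m} - B. card ({1..n} - {\<sigma> j}))"
    by (simp add: card_image card_SigmaI)
  also have "\<dots> = (\<Sum>j\<in>{1..m} - B. n - 1)"
    using assms(1) by (intro sum.cong) auto
  also have "\<dots> = (m - card B) * (n - 1)"
    using assms(2) finite_subset[OF assms(2)] by (simp add: card_Diff_subset)
  finally show ?thesis .
qed

lemma many_unqueried_free_cells:
  assumes "8 \<le> n" "2 * k < m" "\<And>j. j \<in> {1..m} \<Longrightarrow> \<sigma> j \<in> {1..n}" "B \<subseteq> {1..m}" "card B = k"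
    and "8 * cost T x < n * m"
  shows "2 * m \<le> card (free_cells n m \<sigma> B - queries T x)"
proof -
  have "16 * m + n * m \<le> 4 * (m + 1) * (n - 1)"
    using assms(1) by (induction n rule: dec_induct) (simp_all add: algebra_simps)
  also have "\<dots> \<le> 8 * (m - k) * (n - 1)"
    using assms(2) by (intro mult_le_mono1) arith
  finally have "2 * m + cost T x \<le> card (free_cells n m \<sigma> B)"
    using assms(6) card_free_cells[OF assms(3,4)] assms(5) by (simp add: mult.assoc)
  moreover have "card (free_cells n m \<sigma> B) - card (queries T x) \<le> card (free_cells n m \<sigma> B - queries T x)"
    by (rule diff_card_le_card_Diff) simp
  moreover have "card (queries T x) \<le> cost T x"
    by (rule card_queries_le_cost)
  ultimately show ?thesis
    by linarith
qed

text \<open>From a hard input with zero cells \<open>(\<sigma> j, j)\<close> we build an input with \<open>h = 1\<close>: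
  the columns \<open>b s\<close> become the marked columns with special elements \<open>(\<sigma> (b s), b s)\<close>,
  and the tree \<open>T\<close> is laid out with its root at the first special element, its inner nodes
  at the free cells \<open>\<iota> u\<close>, and leaf \<open>j\<close> at the zero cell of column \<open>j\<close>.\<close>
locale yes_instance =
  fixes n m k :: nat and \<sigma> b :: "nat \<Rightarrow> nat" and \<iota> :: "bool list \<Rightarrow> cell"
  assumes two_le_m: "2 \<le> m" and one_le_k: "1 \<le> k"
    and \<sigma>_range: "\<And>j. j \<in> {1..m} \<Longrightarrow> \<sigma> j \<in> {1..n}"
    and inj_b: "inj_on b {1..k}" and b_range: "b ` {1..k} \<subseteq> {1..m}"
    and inj_\<iota>: "inj_on \<iota> (inner_paths m)"
    and \<iota>_range: "\<iota> ` inner_paths m \<subseteq> free_cells n m \<sigma> (b ` {1..k})"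
begin

lemmas \<iota>_free = \<iota>_range[unfolded free_cells_def]

abbreviation marked :: "nat set" where
  "marked \<equiv> b ` {1..k}"

definition special :: "nat \<Rightarrow> cell" where
  "special s = (\<sigma> (b s), b s)"

definition leaf_column :: "bool list \<Rightarrow> nat" where
  "leaf_column u = (SOME j. j \<in> {1..m} - marked \<and> Tpath m j = u)"

definition node :: "bool list \<Rightarrow> cell" where
  "node u = (if \<exists>j\<in>{1..m} - marked. Tpath m j = u then (\<sigma> (leaf_column u), leaf_column u)
             else if u \<in> inner_paths m then \<iota> u else special 1)"

definition next_special :: "nat \<Rightarrow> cell" where
  "next_special j = (let s = inv_into {1..k} b j in if s < k then special (Suc s) else special 1)"

definition yes_input :: "cell \<Rightarrow> sym" where
  "yes_input c = (if snd c \<in> marked \<and> fst c = \<sigma> (snd c)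
            then (True, Some (node [False]), Some (node [True]), Some (next_special (snd c)))
          else if c \<in> \<iota> ` inner_paths m
            then (False, Some (node (inv_into (inner_paths m) \<iota> c @ [False])),
                  Some (node (inv_into (inner_paths m) \<iota> c @ [True])), None)
          else hard_input n m \<sigma> c)"

lemma special_in_grid: "s \<in> {1..k} \<Longrightarrow> special s \<in> grid n m"
proof -
  assume "s \<in> {1..k}"
  then have "b s \<in> {1..m}"
    using b_range by blast
  then show ?thesis
    using \<sigma>_range[of "b s"] by (simp add: special_def grid_def)
qed

lemma node_in_grid: "node u \<in> grid n m"
proof -
  have "\<sigma> j \<in> {1..n}" if "j \<in> {1..m}" for j
    using that \<sigma>_range by blast
  moreover have "leaf_column u \<in> {1..m} - marked" if "\<exists>j\<in>{1..m} - marked. Tpath m j = u"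
  proof -
    have "\<exists>j. j \<in> {1..m} - marked \<and> Tpath m j = u"
      using that by blast
    then show ?thesis
      unfolding leaf_column_def by (rule someI_ex[THEN conjunct1])
  qed
  ultimately show ?thesis
    using \<iota>_free special_in_grid[of 1] one_le_k by (auto simp: node_def grid_def)
qed

lemma next_special_in_grid: "next_special j \<in> grid n m"
  using special_in_grid one_le_k by (simp add: next_special_def Let_def)

lemma yes_input_in_inputs: "yes_input \<in> inputs n m"
proof -
  have "(\<sigma> j, j) \<in> grid n m" if "j \<in> marked" for j
    using that b_range \<sigma>_range by (force simp: grid_def)
  then have "yes_input (i, j) = hard_input n m \<sigma> (i, j)" if "(i, j) \<notin> grid n m" for i j
    using that \<iota>_free by (auto simp: yes_input_def)
  moreover have "yes_input c \<in> Sigma_alph n m" for c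
    using hard_input_in_inputs[of n m \<sigma>] node_in_grid next_special_in_grid
    by (auto simp: yes_input_def inputs_def Sigma_alph_def ptrs_def hard_input_def zero_sym_def blank_def)
  ultimately show ?thesis
    using hard_input_in_inputs[of n m \<sigma>] by (simp add: inputs_def)
qed

lemma yes_input_special: "s \<in> {1..k} \<Longrightarrow> yes_input (special s) = (True, Some (node [False]), Some (node [True]), Some (next_special (b s)))"
  by (simp add: yes_input_def special_def)

lemma yes_input_marked_column: "j \<in> marked \<Longrightarrow> i \<in> {1..n} \<Longrightarrow> i \<noteq> \<sigma> j \<Longrightarrow> yes_input (i, j) = blank"
  using \<iota>_free b_range by (force simp: yes_input_def hard_input_def grid_def)

lemma yes_input_leaf: "j \<notin> marked \<Longrightarrow> yes_input (\<sigma> j, j) = zero_sym"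
proof -
  have "(\<sigma> j, j) \<notin> \<iota> ` inner_paths m"
  proof
    assume "(\<sigma> j, j) \<in> \<iota> ` inner_paths m"
    then have "(\<sigma> j, j) \<in> {c \<in> grid n m. snd c \<notin> marked \<and> fst c \<noteq> \<sigma> (snd c)}"
      using \<iota>_free by blast
    then show False
      by simp
  qed
  then show "j \<notin> marked \<Longrightarrow> ?thesis"
    by (simp add: yes_input_def hard_input_def)
qed

lemma yes_input_eq_hard_input:
  "c \<notin> \<iota> ` inner_paths m \<Longrightarrow> (snd c \<in> marked \<Longrightarrow> fst c \<noteq> \<sigma> (snd c)) \<Longrightarrow> yes_input c = hard_input n m \<sigma> c"
  by (auto simp: yes_input_def)

lemma marked_cols_yes_input: "marked_cols n m yes_input = marked"
proof -
  have "j \<notin> marked_cols n m yes_input" if "j \<notin> marked" for j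
  proof
    assume "j \<in> marked_cols n m yes_input"
    then have "j \<in> {1..m}" and "\<forall>i\<in>{1..n}. val (yes_input (i, j))"
      by (auto simp: marked_cols_def)
    then have "val (yes_input (\<sigma> j, j))"
      using \<sigma>_range by blast
    then show False
      using yes_input_leaf[OF that] by (simp add: zero_sym_def val_def)
  qed
  moreover have "val (yes_input (i, j))" if "j \<in> marked" "i \<in> {1..n}" for i j
    using yes_input_marked_column[OF that] that(1)
    by (cases "i = \<sigma> j") (simp_all add: yes_input_def val_def blank_def)
  then have "marked \<subseteq> marked_cols n m yes_input"
    using b_range by (auto simp: marked_cols_def)
  ultimately show ?thesis
    by blast
qed

lemma node_Tpath: "j \<in> {1..m} - marked \<Longrightarrow> node (Tpath m j) = (\<sigma> j, j)"
proof -
  assume j: "j \<in> {1..m} - marked"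
  have "leaf_column (Tpath m j) \<in> {1..m} - marked \<and> Tpath m (leaf_column (Tpath m j)) = Tpath m j"
    unfolding leaf_column_def by (rule someI[of _ j]) (use j in simp)
  then have "leaf_column (Tpath m j) = j"
    using Tpath_inj[OF two_le_m] j by blast
  with j show ?thesis
    by (auto simp: node_def)
qed

lemma node_Nil: "node [] = special 1"
proof -
  have "Tpath m j \<noteq> []" for j
    using length_Tpath[OF two_le_m, of j] by auto
  then show ?thesis
    by (simp add: node_def inner_paths_def)
qed

lemma node_proper_prefix:
  assumes "j \<in> {1..m}" "0 < i" "i < length (Tpath m j)"
  shows "node (take i (Tpath m j)) = \<iota> (take i (Tpath m j))"
proof -
  have "\<not> (\<exists>j'\<in>{1..m} - marked. Tpath m j' = take i (Tpath m j))"
    using assms Tpath_not_proper_prefix[OF two_le_m] by (metis DiffD1)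
  then show ?thesis
    using assms take_Tpath_in_inner_paths[OF two_le_m] by (simp add: node_def)
qed

lemma yes_input_inner_node:
  assumes "u \<in> inner_paths m"
  shows "yes_input (\<iota> u) = (False, Some (node (u @ [False])), Some (node (u @ [True])), None)"
proof -
  have "\<not> (snd (\<iota> u) \<in> marked \<and> fst (\<iota> u) = \<sigma> (snd (\<iota> u)))"
    using assms \<iota>_free by blast
  then show ?thesis
    using assms inj_\<iota> by (simp add: yes_input_def)
qed

lemma follow_yes_input: "j \<in> {1..m} - marked \<Longrightarrow> follow yes_input (special 1) (Tpath m j) = Some (\<sigma> j, j)"
proof -
  assume j: "j \<in> {1..m} - marked"
  have "follow yes_input (node []) (Tpath m j) = Some (node (Tpath m j))"
  proof (rule follow_labelled_path)
    fix u c w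
    assume split: "Tpath m j = u @ c # w"
    show "(if c then rpoint (yes_input (node u)) else lpoint (yes_input (node u))) = Some (node (u @ [c]))"
    proof (cases "u = []")
      case True
      then show ?thesis
        using yes_input_special[of 1] one_le_k by (simp add: node_Nil rpoint_def lpoint_def)
    next
      case False
      have "u = take (length u) (Tpath m j)" "length u < length (Tpath m j)"
        using split by simp_all
      then have "node u = \<iota> u" and "u \<in> inner_paths m"
        using False j node_proper_prefix[of j "length u"] take_Tpath_in_inner_paths[OF two_le_m, of "length u" j]
        by auto
      then show ?thesis
        using yes_input_inner_node by (simp add: rpoint_def lpoint_def)
    qed
  qed
  then show ?thesis
    using j by (simp add: node_Nil node_Tpath)
qed

lemma h_yes_input: "h k n m yes_input"
  unfolding h_def Let_def marked_cols_yes_input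
proof (intro conjI exI)
  show "card marked = k"
    using inj_b by (simp add: card_image)
  show "bij_betw b {1..k} marked"
    using inj_b by (simp add: bij_betw_def)
  show "\<forall>s\<in>{1..k}. \<sigma> (b s) \<in> {1..n} \<and> yes_input (\<sigma> (b s), b s) \<noteq> blank \<and>
          (\<forall>i\<in>{1..n}. i \<noteq> \<sigma> (b s) \<longrightarrow> yes_input (i, b s) = blank)"
    using \<sigma>_range b_range yes_input_special yes_input_marked_column by (auto simp: special_def blank_def)
  have inv_b: "inv_into {1..k} b (b s) = s" if "s \<in> {1..k}" for s
    using inj_b that by (simp add: inv_into_f_f)
  show "\<forall>s\<in>{1..k}. s < k \<longrightarrow> ipoint (yes_input (\<sigma> (b s), b s)) = Some (\<sigma> (b (Suc s)), b (Suc s))"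
    using yes_input_special inv_b by (simp add: special_def next_special_def ipoint_def)
  show "ipoint (yes_input (\<sigma> (b k), b k)) = Some (\<sigma> (b 1), b 1)"
    using yes_input_special[of k] inv_b[of k] one_le_k by (simp add: special_def next_special_def ipoint_def)
  show "\<forall>s\<in>{1..k}. \<forall>t\<in>{1..k}. lpoint (yes_input (\<sigma> (b s), b s)) = lpoint (yes_input (\<sigma> (b t), b t)) \<and>
          rpoint (yes_input (\<sigma> (b s), b s)) = rpoint (yes_input (\<sigma> (b t), b t))"
    using yes_input_special by (simp add: special_def lpoint_def rpoint_def)
  show "\<forall>j\<in>{1..m} - marked. \<exists>l. follow yes_input (\<sigma> (b 1), b 1) (Tpath m j) = Some l \<and> snd l = j \<and> \<not> val (yes_input l)"
    using follow_yes_input yes_input_leaf by (simp add: special_def zero_sym_def val_def)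
qed

end

lemma cheap_tree_finds_zero_cells:
  assumes "8 \<le> n" "1 \<le> k" "2 * k < m"
    and \<sigma>_range: "\<And>j. j \<in> {1..m} \<Longrightarrow> \<sigma> j \<in> {1..n}"
    and correct: "\<forall>x\<in>inputs n m. eval T x = h k n m x"
    and cheap: "8 * cost T (hard_input n m \<sigma>) < n * m"
  shows "card {j\<in>{1..m}. (\<sigma> j, j) \<notin> queries T (hard_input n m \<sigma>)} < k"
proof (rule ccontr)
  define z where "z = hard_input n m \<sigma>"
  define Q where "Q = queries T z"
  assume "\<not> ?thesis"
  then have "k \<le> card {j\<in>{1..m}. (\<sigma> j, j) \<notin> Q}"
    by (simp add: Q_def z_def)
  then obtain B where B: "B \<subseteq> {j\<in>{1..m}. (\<sigma> j, j) \<notin> Q}" "card B = k" "finite B"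
    by (rule obtain_subset_with_card_n)
  then obtain b where b: "bij_betw b {1..k} B"
    using ex_bij_betw_nat_finite_1 by blast
  have B_sub: "B \<subseteq> {1..m}"
    using B(1) by auto
  define F where "F = free_cells n m \<sigma> B - Q"
  have "card (inner_paths m) \<le> card F"
    using many_unqueried_free_cells[where \<sigma> = \<sigma>, OF assms(1,3) \<sigma>_range B_sub B(2) cheap]
      card_inner_paths[of m] assms(3)
    by (simp add: F_def Q_def z_def)
  moreover have "finite F"
    by (simp add: F_def free_cells_def grid_def)
  ultimately obtain \<iota> where \<iota>: "inj_on \<iota> (inner_paths m)" "\<iota> ` inner_paths m \<subseteq> F"
    using card_le_inj[OF finite_inner_paths] by blast
  have b_img: "b ` {1..k} = B" and inj_b: "inj_on b {1..k}"
    using b by (auto simp: bij_betw_def)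
  interpret yes_instance n m k \<sigma> b \<iota>
    using assms(2,3) \<sigma>_range inj_b b_img B_sub \<iota> by unfold_locales (auto simp: F_def)
  have "yes_input c = z c" if "c \<in> Q" for c
  proof (cases c)
    case (Pair i j)
    have "c \<notin> \<iota> ` inner_paths m"
      using that \<iota>(2) by (auto simp: F_def)
    moreover have "i \<noteq> \<sigma> j" if "j \<in> b ` {1..k}"
      using that \<open>c \<in> Q\<close> B(1) b_img Pair by auto
    ultimately show ?thesis
      unfolding Pair z_def by (intro yes_input_eq_hard_input) auto
  qed
  then have "eval T yes_input = eval T z"
    by (intro eval_cong_queries) (simp add: Q_def)
  then show False
    using correct yes_input_in_inputs h_yes_input hard_input_in_inputs not_h_hard_input[OF \<sigma>_range assms(2)]
    by (simp add: z_def)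
qed

lemma sum_PiE_fun_upd:
  fixes G :: "('a \<Rightarrow> 'b) \<Rightarrow> 'c :: comm_semiring_1"
  assumes "finite I" "finite A" "j \<in> I"
  shows "(\<Sum>\<sigma>\<in>PiE I (\<lambda>_. A). \<Sum>r\<in>A. G (\<sigma>(j := r))) = of_nat (card A) * (\<Sum>\<sigma>\<in>PiE I (\<lambda>_. A). G \<sigma>)"
proof -
  define S where "S = PiE I (\<lambda>_. A)"
  define R where "R \<sigma> \<tau> \<longleftrightarrow> (\<forall>i. i \<noteq> j \<longrightarrow> \<tau> i = \<sigma> i)" for \<sigma> \<tau> :: "'a \<Rightarrow> 'b"
  have fin: "finite S"
    using assms(1,2) by (simp add: S_def finite_PiE)
  have fiber: "(\<lambda>r. \<sigma>(j := r)) ` A = {\<tau>\<in>S. R \<sigma> \<tau>}" if "\<sigma> \<in> S" for \<sigma>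
  proof
    show "(\<lambda>r. \<sigma>(j := r)) ` A \<subseteq> {\<tau>\<in>S. R \<sigma> \<tau>}"
      using that assms(3) by (auto simp: S_def R_def PiE_iff extensional_def)
    show "{\<tau>\<in>S. R \<sigma> \<tau>} \<subseteq> (\<lambda>r. \<sigma>(j := r)) ` A"
    proof
      fix \<tau> assume "\<tau> \<in> {\<tau>\<in>S. R \<sigma> \<tau>}"
      then have "\<tau> = \<sigma>(j := \<tau> j)" and "\<tau> j \<in> A"
        using assms(3) by (auto simp: R_def S_def)
      then show "\<tau> \<in> (\<lambda>r. \<sigma>(j := r)) ` A"
        by blast
    qed
  qed
  have inj: "inj_on (\<lambda>r. \<sigma>(j := r)) A" for \<sigma> :: "'a \<Rightarrow> 'b"
    by (rule inj_onI) (metis fun_upd_same)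
  have "(\<Sum>\<sigma>\<in>S. \<Sum>r\<in>A. G (\<sigma>(j := r))) = (\<Sum>\<sigma>\<in>S. \<Sum>\<tau>\<in>{\<tau>\<in>S. R \<sigma> \<tau>}. G \<tau>)"
    by (intro sum.cong refl) (simp add: fiber[symmetric] sum.reindex[OF inj])
  also have "\<dots> = (\<Sum>\<tau>\<in>S. \<Sum>\<sigma>\<in>{\<sigma>\<in>S. R \<sigma> \<tau>}. G \<tau>)"
    by (rule sum.swap_restrict[OF fin fin])
  also have "\<dots> = (\<Sum>\<tau>\<in>S. of_nat (card A) * G \<tau>)"
  proof (intro sum.cong refl)
    fix \<tau> assume "\<tau> \<in> S"
    have "{\<sigma>\<in>S. R \<sigma> \<tau>} = {\<sigma>\<in>S. R \<tau> \<sigma>}"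
      by (auto simp: R_def)
    then have "card {\<sigma>\<in>S. R \<sigma> \<tau>} = card A"
      using fiber[OF \<open>\<tau> \<in> S\<close>] inj card_image by metis
    then show "(\<Sum>\<sigma>\<in>{\<sigma>\<in>S. R \<sigma> \<tau>}. G \<tau>) = of_nat (card A) * G \<tau>"
      by simp
  qed
  finally show ?thesis
    by (simp add: S_def sum_distrib_left)
qed

lemma column_search_bound:
  assumes "j \<in> {1..m}"
  shows "4 * n * card {r\<in>{1..n}. (r, j) \<in> queries T (hard_input n m (\<sigma>(j := r)))}
         \<le> 8 * (\<Sum>r\<in>{1..n}. card (queries T (hard_input n m (\<sigma>(j := r))) \<inter> ({1..n} \<times> {j}))) + n ^ 2"
proof -
  define P where "P = {1..n} \<times> {j}"
  define x where "x c = (if snd c = j \<and> c \<in> grid n m then blank else hard_input n m \<sigma> c)" for c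
  define f where "f = card {r\<in>{1..n}. (r, j) \<in> queries T (hard_input n m (\<sigma>(j := r)))}"
  define S where "S = (\<Sum>r\<in>{1..n}. card (queries T (hard_input n m (\<sigma>(j := r))) \<inter> P))"
  have hard: "hard_input n m (\<sigma>(j := r)) = x((r, j) := zero_sym)" if "r \<in> {1..n}" for r
    using that assms by (auto simp: x_def hard_input_def grid_def)
  have inj: "inj_on (\<lambda>r. (r, j)) X" for X :: "nat set"
    by (simp add: inj_on_def)
  have P: "P = (\<lambda>r. (r, j)) ` {1..n}"
    by (auto simp: P_def)
  have "needles_found T x (\<lambda>_. zero_sym) P
      = (\<lambda>r. (r, j)) ` {r\<in>{1..n}. (r, j) \<in> queries T (hard_input n m (\<sigma>(j := r)))}"
    using hard by (auto simp: needles_found_def P)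
  moreover have "needle_probes T x (\<lambda>_. zero_sym) P = S"
    by (simp add: needle_probes_def S_def P sum.reindex[OF inj] hard)
  ultimately have "f * (f + 1) \<le> 2 * S"
    using needle_search_queries[of P T x "\<lambda>_. zero_sym"] by (simp add: P_def f_def card_image[OF inj])
  moreover have "4 * n * f \<le> 4 * f * f + n * n"
  proof -
    have "int (4 * n * f) \<le> int (4 * f * f + n * n)"
      using zero_le_power2[of "2 * int f - int n"] by (simp add: power2_eq_square algebra_simps)
    then show ?thesis
      by (simp only: of_nat_le_iff)
  qed
  ultimately have "4 * n * f \<le> 8 * S + n ^ 2"
    by (simp add: power2_eq_square algebra_simps)
  then show ?thesis
    unfolding f_def S_def P_def .
qed

lemma column_average_bound:
  assumes "j \<in> {1..m}" "0 < n"
  defines "S \<equiv> PiE {1..m} (\<lambda>_. {1..n})"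
  shows "4 * n * card {\<sigma>\<in>S. (\<sigma> j, j) \<in> queries T (hard_input n m \<sigma>)}
         \<le> 8 * (\<Sum>\<sigma>\<in>S. card (queries T (hard_input n m \<sigma>) \<inter> ({1..n} \<times> {j}))) + card S * n"
proof -
  define F where "F \<sigma> = (of_bool ((\<sigma> j, j) \<in> queries T (hard_input n m \<sigma>)) :: nat)" for \<sigma>
  define q where "q \<sigma> = card (queries T (hard_input n m \<sigma>) \<inter> ({1..n} \<times> {j}))" for \<sigma>
  have fin: "finite S"
    by (simp add: S_def finite_PiE)
  have "(\<Sum>r\<in>{1..n}. F (\<sigma>(j := r))) = card {r\<in>{1..n}. (r, j) \<in> queries T (hard_input n m (\<sigma>(j := r)))}"
    for \<sigma> :: "nat \<Rightarrow> nat"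
    by (simp add: F_def Int_def conj_commute)
  then have "(\<Sum>\<sigma>\<in>S. card {r\<in>{1..n}. (r, j) \<in> queries T (hard_input n m (\<sigma>(j := r)))})
      = n * card {\<sigma>\<in>S. (\<sigma> j, j) \<in> queries T (hard_input n m \<sigma>)}"
    using sum_PiE_fun_upd[of "{1..m}" "{1..n}" j F] assms(1) fin
    by (simp add: S_def F_def Int_def conj_commute)
  then have "n * (4 * n * card {\<sigma>\<in>S. (\<sigma> j, j) \<in> queries T (hard_input n m \<sigma>)})
      = (\<Sum>\<sigma>\<in>S. 4 * n * card {r\<in>{1..n}. (r, j) \<in> queries T (hard_input n m (\<sigma>(j := r)))})"
    by (simp add: sum_distrib_left[symmetric] mult_ac)
  also have "\<dots> \<le> (\<Sum>\<sigma>\<in>S. 8 * (\<Sum>r\<in>{1..n}. q (\<sigma>(j := r))) + n ^ 2)"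
    unfolding q_def by (intro sum_mono column_search_bound assms(1))
  also have "\<dots> = n * (8 * (\<Sum>\<sigma>\<in>S. q \<sigma>) + card S * n)"
    using sum_PiE_fun_upd[of "{1..m}" "{1..n}" j q] assms(1)
    by (simp add: S_def sum.distrib sum_distrib_left[symmetric] power2_eq_square algebra_simps)
  finally show ?thesis
    using assms(2) by (simp add: q_def)
qed

lemma hard_input_cost_or_found:
  assumes "8 \<le> n" "1 \<le> k" "2 * k < m"
    and \<sigma>_range: "\<And>j. j \<in> {1..m} \<Longrightarrow> \<sigma> j \<in> {1..n}"
    and correct: "\<forall>x\<in>inputs n m. eval T x = h k n m x"
  shows "n * m \<le> 2 * n * card {j\<in>{1..m}. (\<sigma> j, j) \<in> queries T (hard_input n m \<sigma>)}
                  + 8 * cost T (hard_input n m \<sigma>)"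
proof (cases "8 * cost T (hard_input n m \<sigma>) < n * m")
  case True
  let ?found = "\<lambda>j. (\<sigma> j, j) \<in> queries T (hard_input n m \<sigma>)"
  have "card {j\<in>{1..m}. \<not> ?found j} < k"
    using cheap_tree_finds_zero_cells[OF assms True] .
  moreover have "card {1..m} = card ({j\<in>{1..m}. ?found j} \<union> {j\<in>{1..m}. \<not> ?found j})"
    by (rule arg_cong[where f = card]) auto
  moreover have "card ({j\<in>{1..m}. ?found j} \<union> {j\<in>{1..m}. \<not> ?found j})
      = card {j\<in>{1..m}. ?found j} + card {j\<in>{1..m}. \<not> ?found j}"
    by (rule card_Un_disjoint) auto
  moreover have "card {1..m} = m"
    by simp
  ultimately have "m \<le> 2 * card {j\<in>{1..m}. ?found j}"
    using assms(3) by linarith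
  then have "n * m \<le> 2 * n * card {j\<in>{1..m}. ?found j}"
    using mult_le_mono2[of m _ n] by (simp add: ac_simps)
  then show ?thesis
    by linarith
qed simp

lemma sum_card_Collect_swap:
  "finite A \<Longrightarrow> finite B \<Longrightarrow> (\<Sum>a\<in>A. card {b\<in>B. P a b}) = (\<Sum>b\<in>B. card {a\<in>A. P a b})"
proof -
  assume fin: "finite A" "finite B"
  have "(\<Sum>a\<in>A. card {b\<in>B. P a b}) = (\<Sum>a\<in>A. \<Sum>b\<in>B. of_bool (P a b))"
    using fin by (simp add: Int_def conj_commute)
  also have "\<dots> = (\<Sum>b\<in>B. \<Sum>a\<in>A. of_bool (P a b))"
    by (rule sum.swap)
  also have "\<dots> = (\<Sum>b\<in>B. card {a\<in>A. P a b})"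
    using fin by (simp add: Int_def conj_commute)
  finally show ?thesis .
qed

lemma sum_cost_hard_inputs:
  assumes "8 \<le> n" "1 \<le> k" "2 * k < m"
    and correct: "\<forall>x\<in>inputs n m. eval T x = h k n m x"
  defines "S \<equiv> PiE {1..m} (\<lambda>_. {1..n})"
  shows "card S * (n * m) \<le> 24 * (\<Sum>\<sigma>\<in>S. cost T (hard_input n m \<sigma>))"
proof -
  define found where "found \<sigma> = card {j\<in>{1..m}. (\<sigma> j, j) \<in> queries T (hard_input n m \<sigma>)}" for \<sigma>
  define C where "C = (\<Sum>\<sigma>\<in>S. cost T (hard_input n m \<sigma>))"
  have fin: "finite S"
    by (simp add: S_def finite_PiE)
  have "card S * (n * m) = (\<Sum>\<sigma>\<in>S. n * m)"
    by simp
  also have "\<dots> \<le> (\<Sum>\<sigma>\<in>S. 2 * n * found \<sigma> + 8 * cost T (hard_input n m \<sigma>))"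
    unfolding found_def
    by (intro sum_mono hard_input_cost_or_found[OF assms(1-3) _ correct]) (auto simp: S_def)
  also have "\<dots> = 2 * n * (\<Sum>\<sigma>\<in>S. found \<sigma>) + 8 * C"
    by (simp add: C_def sum.distrib sum_distrib_left)
  finally have lower: "card S * (n * m) \<le> 2 * (n * (\<Sum>\<sigma>\<in>S. found \<sigma>)) + 8 * C"
    by (simp add: mult.assoc)
  have "4 * (n * (\<Sum>\<sigma>\<in>S. found \<sigma>))
      = (\<Sum>j\<in>{1..m}. 4 * n * card {\<sigma>\<in>S. (\<sigma> j, j) \<in> queries T (hard_input n m \<sigma>)})"
    unfolding found_def sum_card_Collect_swap[OF fin finite_atLeastAtMost] mult.assoc[symmetric]
    by (rule sum_distrib_left)
  also have "\<dots> \<le> (\<Sum>j\<in>{1..m}. 8 * (\<Sum>\<sigma>\<in>S. card (queries T (hard_input n m \<sigma>) \<inter> ({1..n} \<times> {j})))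
                                 + card S * n)"
    using assms(1) unfolding S_def by (intro sum_mono column_average_bound) auto
  also have "\<dots> = 8 * (\<Sum>j\<in>{1..m}. \<Sum>\<sigma>\<in>S. card (queries T (hard_input n m \<sigma>) \<inter> ({1..n} \<times> {j})))
                  + card S * (n * m)"
    by (simp add: sum.distrib sum_distrib_left mult_ac)
  also have "\<dots> = 8 * (\<Sum>\<sigma>\<in>S. \<Sum>j\<in>{1..m}. card (queries T (hard_input n m \<sigma>) \<inter> ({1..n} \<times> {j})))
                  + card S * (n * m)"
    by (subst sum.swap) (rule refl)
  also have "\<dots> \<le> 8 * C + card S * (n * m)"
    unfolding C_def by (intro add_mono mult_le_mono2 sum_mono sum_card_queries_columns_le_cost) auto
  finally show ?thesis
    using lower unfolding C_def by linarith
qed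

lemma R0_ge_average_cost:
  assumes "finite I" "I \<noteq> {}" "\<And>i. i \<in> I \<Longrightarrow> \<phi> i \<in> D"
    and avg: "\<And>T. \<forall>x\<in>D. eval T x = f x \<Longrightarrow> c * real (card I) \<le> (\<Sum>i\<in>I. real (cost T (\<phi> i)))"
  shows "ennreal c \<le> R0 D f"
  unfolding R0_def
proof (rule INF_greatest)
  fix \<mu> :: "dtree pmf"
  assume "\<mu> \<in> {\<mu>. \<forall>T\<in>set_pmf \<mu>. \<forall>x\<in>D. eval T x = f x}"
  then have correct: "\<forall>x\<in>D. eval T x = f x" if "T \<in> set_pmf \<mu>" for T
    using that by blast
  define E where "E x = (\<integral>\<^sup>+ T. ennreal (real (cost T x)) \<partial>measure_pmf \<mu>)" for x
  define M where "M = (SUP x\<in>D. E x)"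
  have "ennreal (c * real (card I)) \<le> (\<integral>\<^sup>+ T. ennreal (\<Sum>i\<in>I. real (cost T (\<phi> i))) \<partial>measure_pmf \<mu>)"
  proof -
    have "(\<integral>\<^sup>+ T. ennreal (c * real (card I)) \<partial>measure_pmf \<mu>)
        \<le> (\<integral>\<^sup>+ T. ennreal (\<Sum>i\<in>I. real (cost T (\<phi> i))) \<partial>measure_pmf \<mu>)"
      using avg[OF correct] by (intro nn_integral_mono_AE AE_pmfI ennreal_leI)
    then show ?thesis
      by (simp add: measure_pmf.emeasure_space_1)
  qed
  also have "\<dots> = (\<Sum>i\<in>I. E (\<phi> i))"
  proof -
    have "(\<Sum>i\<in>I. E (\<phi> i)) = (\<integral>\<^sup>+ T. (\<Sum>i\<in>I. ennreal (real (cost T (\<phi> i)))) \<partial>measure_pmf \<mu>)"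
      unfolding E_def by (rule nn_integral_sum[symmetric]) simp
    then show ?thesis
      by simp
  qed
  also have "\<dots> \<le> (\<Sum>i\<in>I. M)"
    unfolding M_def using assms(3) by (intro sum_mono SUP_upper)
  also have "\<dots> = ennreal (real (card I)) * M"
    by (simp add: ennreal_of_nat_eq_real_of_nat)
  finally have "ennreal (real (card I)) * ennreal c \<le> ennreal (real (card I)) * M"
    by (simp add: ennreal_mult'' mult.commute)
  moreover have "0 < card I"
    using assms(1,2) by (simp add: card_gt_0_iff)
  ultimately show "ennreal c \<le> M"
    by (simp add: ennreal_mult_le_mult_iff)
qed

theorem theorem15:
  shows "\<exists>c::real. c > 0 \<and> (\<exists>N::nat. \<forall>n m k :: nat.
           N \<le> n \<longrightarrow> N \<le> m \<longrightarrow> 1 \<le> k \<longrightarrow> 2 * k < m \<longrightarrow>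
           ennreal (c * real n * real m) \<le> R0 (inputs n m) (h k n m))"
proof (intro exI conjI allI impI)
  show "(1 / 24 :: real) > 0"
    by simp
  fix n m k :: nat
  assume "8 \<le> n" "8 \<le> m" "1 \<le> k" "2 * k < m"
  let ?S = "PiE {1..m} (\<lambda>_. {1..n})"
  show "ennreal (1 / 24 * real n * real m) \<le> R0 (inputs n m) (h k n m)"
  proof (rule R0_ge_average_cost)
    show "finite ?S" "?S \<noteq> {}"
      using \<open>8 \<le> n\<close> by (simp_all add: finite_PiE PiE_eq_empty_iff)
    show "hard_input n m \<sigma> \<in> inputs n m" for \<sigma>
      by (rule hard_input_in_inputs)
    fix T
    assume "\<forall>x\<in>inputs n m. eval T x = h k n m x"
    from sum_cost_hard_inputs[OF \<open>8 \<le> n\<close> \<open>1 \<le> k\<close> \<open>2 * k < m\<close> this]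
    have "real (card ?S * (n * m)) \<le> real (24 * (\<Sum>\<sigma>\<in>?S. cost T (hard_input n m \<sigma>)))"
      by (simp only: of_nat_le_iff)
    then show "1 / 24 * real n * real m * real (card ?S) \<le> (\<Sum>\<sigma>\<in>?S. real (cost T (hard_input n m \<sigma>)))"
      by (simp add: mult_ac)
  qed
qed

end
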